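(* Let $n\ge2$, $C>0$, let $x\in\mathcal{K}_{S+}$ with $x_1\le x_2\le\dots\le x_n$, and let $\tilde{x}=x+\eta$ where either $\eta$ has i.i.d. Laplace entries with mean $0$ and scale $b>0$, or $\eta\sim\mathcal{N}(0,\sigma^2I_n)$ with $\sigma>0$. Let $\alpha=\max_{i}\mathcal{B}(\pi_{S+})_i-\min_i\mathcal{B}(\pi_{S+})_i$. Then $$\alpha\ge \mathcal{B}((\pi_S)_+)_1-\mathcal{B}((\pi_S)_+)_n,$$ and $$\alpha\le\min\Big\{x_n-x_1,\ \mathcal{B}((\pi_S)_+)_1-\mathcal{B}((\pi_S)_+)_n+\sum_{i=1}^n\mathbb{E}\big[(\pi_S(\tilde{x})_i)_-\big]\Big\}.$$
   Context: Let $C>0$, $\mathcal{K}_S=\{v\in\mathbb{R}^n:\sum_i v_i=C\}$, $\mathcal{K}_{S+}=\{v\in\mathcal{K}_S:v\ge0\}$; $\pi_S$ and $\pi_{S+}$ are the Euclidean projections onto $\mathcal{K}_S$ and $\mathcal{K}_{S+}$. $(y)_+=\max\{y,0\}$, $(y)_-=-\min\{y,0\}$ componentwise. For a map $\pi:\mathbb{R}^n\to\mathbb{R}^n$, $\mathcal{B}(\pi)=\mathbb{E}_{\tilde{x}}[\pi(\tilde{x})]-x$; in particular $\mathcal{B}((\pi_S)_+)=\mathbb{E}_{\tilde{x}}[(\pi_S(\tilde{x}))_+]-x$. *)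

theory Defs
  imports "HOL-Analysis.Analysis" "HOL-Probability.Probability"
begin

definition KS :: "real \<Rightarrow> (real ^ 'n) set" where
  "KS C = {v. (\<Sum>i\<in>UNIV. v $ i) = C}"

definition KSplus :: "real \<Rightarrow> (real ^ 'n) set" where
  "KSplus C = {v \<in> KS C. \<forall>i. 0 \<le> v $ i}"

definition piS :: "real \<Rightarrow> real ^ 'n \<Rightarrow> real ^ 'n" where
  "piS C y = closest_point (KS C) y"

definition piSplus :: "real \<Rightarrow> real ^ 'n \<Rightarrow> real ^ 'n" where
  "piSplus C y = closest_point (KSplus C) y"

definition pos_part_vec :: "real ^ 'n \<Rightarrow> real ^ 'n" where
  "pos_part_vec v = (\<chi> i. max (v $ i) 0)"

definition negp :: "real \<Rightarrow> real" where
  "negp y = - min y 0"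

definition bias :: "(real ^ 'n) measure \<Rightarrow> (real ^ 'n \<Rightarrow> real ^ 'n) \<Rightarrow> real ^ 'n \<Rightarrow> real ^ 'n" where
  "bias M p x = (\<integral>\<eta>. p (x + \<eta>) \<partial>M) - x"

definition laplace_density :: "real \<Rightarrow> real \<Rightarrow> real" where
  "laplace_density b t = exp (- \<bar>t\<bar> / b) / (2 * b)"

definition laplace_noise :: "real \<Rightarrow> (real ^ 'n) measure" where
  "laplace_noise b = density lborel (\<lambda>v. ennreal (\<Prod>i\<in>UNIV. laplace_density b (v $ i)))"

definition gaussian_noise :: "real \<Rightarrow> (real ^ 'n) measure" where
  "gaussian_noise \<sigma> = density lborel (\<lambda>v. ennreal (\<Prod>i\<in>UNIV. normal_density 0 \<sigma> (v $ i)))"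

end

theory Submission
  imports Defs
begin

(*
  Both projections are shifts followed, for the simplex, by clipping:
  piS C y = y - t for a scalar t, and piSplus C y = max (piS C y - s) 0 for some
  0 <= s <= sum_k negp (piS C y $ k).  From this, for y_i <= y_j one reads off pointwise
  inequalities between the i-th and j-th coordinates of the two projections, each of the form
  h y >= 0 with h antisymmetric under exchanging the coordinates i and j.

  The noise has a product density whose marginal f is PF2 (log-concave), so for x_i <= x_j
  the density of x + eta dominates its mirror image under the exchange of i and j on the
  half-space y_i <= y_j.  Hence E h (x + eta) >= 0 for every such h.  Three applications show
  that the bias of piSplus is antitone in the coordinate (so alpha is its first minus its
  last entry), that alpha <= x_n - x_1, and that alpha dominates the corresponding
  difference for the clipped hyperplane projection; the remaining upper bound is pointwise.
*)

section \<open>Projections onto the hyperplane and the simplex\<close>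

lemma closest_point_eqI:
  fixes S :: "'a::euclidean_space set"
  assumes "convex S" "closed S" "p \<in> S" "\<And>z. z \<in> S \<Longrightarrow> inner (a - p) (z - p) \<le> 0"
  shows "closest_point S a = p"
proof (rule closest_point_unique[OF assms(1-3), symmetric], intro ballI)
  fix z assume "z \<in> S"
  have "(norm (a - z))\<^sup>2 = (norm (a - p))\<^sup>2 - 2 * inner (a - p) (z - p) + (norm (z - p))\<^sup>2"
    using dot_norm_neg[of "a - p" "z - p"] by simp
  then have "(norm (a - p))\<^sup>2 \<le> (norm (a - z))\<^sup>2"
    using assms(4)[OF \<open>z \<in> S\<close>] zero_le_power2[of "norm (z - p)"] by linarith
  then show "dist a p \<le> dist a z"
    unfolding dist_norm by (rule power2_le_imp_le) simp
qed

lemma convex_KS: "convex (KS C :: (real^'n) set)"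
  unfolding KS_def convex_def
  by (auto simp: sum.distrib sum_distrib_left[symmetric]) (metis distrib_right mult_1)

lemma closed_KS: "closed (KS C :: (real^'n) set)"
  unfolding KS_def by (intro closed_Collect_eq continuous_intros)

lemma KSplus_eq: "KSplus C = KS C \<inter> (\<Inter>i. {v::real^'n. 0 \<le> v $ i})"
  unfolding KSplus_def by auto

lemma convex_KSplus: "convex (KSplus C :: (real^'n) set)"
  unfolding KSplus_eq
  by (intro convex_Int convex_KS convex_INT) (auto simp: convex_def)

lemma closed_KSplus: "closed (KSplus C :: (real^'n) set)"
  unfolding KSplus_eq
  by (intro closed_Int closed_KS closed_INT ballI closed_Collect_le continuous_intros)

lemma KSplus_nonempty: "C \<ge> 0 \<Longrightarrow> KSplus C \<noteq> ({} :: (real^'n) set)"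
proof -
  assume "C \<ge> 0"
  then have "(\<chi> k. C / CARD('n)) \<in> (KSplus C :: (real^'n) set)"
    by (simp add: KSplus_def KS_def)
  then show ?thesis by blast
qed

lemma piS_eq: "piS C (y::real^'n) = (\<chi> i. y $ i - ((\<Sum>k\<in>UNIV. y $ k) - C) / CARD('n))"
proof -
  define t where "t = ((\<Sum>k\<in>UNIV. y $ k) - C) / CARD('n)"
  define p where "p = (\<chi> i. y $ i - t :: real^'n)"
  have sum_p: "(\<Sum>i\<in>UNIV. p $ i) = C"
    unfolding p_def t_def by (simp add: sum_subtractf)
  have "piS C y = p"
    unfolding piS_def
  proof (rule closest_point_eqI[OF convex_KS closed_KS])
    show "p \<in> KS C" using sum_p by (simp add: KS_def)
    fix z :: "real^'n" assume "z \<in> KS C"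
    have "inner (y - p) (z - p) = (\<Sum>i\<in>UNIV. t * (z $ i - p $ i))"
      by (simp add: inner_vec_def p_def)
    also have "\<dots> = t * ((\<Sum>i\<in>UNIV. z $ i) - (\<Sum>i\<in>UNIV. p $ i))"
      by (simp add: sum_distrib_left[symmetric] sum_subtractf)
    finally have "inner (y - p) (z - p) = t * ((\<Sum>i\<in>UNIV. z $ i) - (\<Sum>i\<in>UNIV. p $ i))" .
    then show "inner (y - p) (z - p) \<le> 0"
      using \<open>z \<in> KS C\<close> sum_p by (simp add: KS_def)
  qed
  then show ?thesis by (simp add: p_def t_def)
qed

lemma piSplus_eq_threshold:
  assumes "(\<Sum>i\<in>UNIV. max (y $ i - \<tau>) 0) = C"
  shows "piSplus C (y::real^'n) = (\<chi> i. max (y $ i - \<tau>) 0)"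
  unfolding piSplus_def
proof (rule closest_point_eqI[OF convex_KSplus closed_KSplus])
  define p where "p = (\<chi> i. max (y $ i - \<tau>) 0 :: real^'n)"
  show "p \<in> KSplus C"
    using assms by (simp add: KSplus_def KS_def p_def)
  fix z :: "real^'n" assume "z \<in> KSplus C"
  then have sum_z: "(\<Sum>i\<in>UNIV. z $ i) = C" and z_nonneg: "\<And>i. 0 \<le> z $ i"
    by (auto simp: KSplus_def KS_def)
  \<comment> \<open>where \<open>y\<close> is clipped, \<open>y - p \<le> \<tau>\<close> and \<open>z - p \<ge> 0\<close>; elsewhere \<open>y - p = \<tau>\<close>\<close>
  have "(y $ i - p $ i) * (z $ i - p $ i) \<le> \<tau> * (z $ i - p $ i)" for i
  proof (cases "\<tau> \<le> y $ i")
    case False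
    then show ?thesis using z_nonneg[of i] by (simp add: p_def mult_right_mono)
  qed (simp add: p_def)
  then have "inner (y - p) (z - p) \<le> (\<Sum>i\<in>UNIV. \<tau> * (z $ i - p $ i))"
    unfolding inner_vec_def by (intro sum_mono) simp
  also have "\<dots> = \<tau> * ((\<Sum>i\<in>UNIV. z $ i) - (\<Sum>i\<in>UNIV. p $ i))"
    by (simp add: sum_distrib_left[symmetric] sum_subtractf)
  also have "\<dots> = 0"
    using sum_z assms by (simp add: p_def)
  finally show "inner (y - p) (z - p) \<le> 0" .
qed

lemma threshold_exists:
  assumes "C > 0"
  obtains \<tau> where "(\<Sum>i\<in>UNIV. max ((y::real^'n) $ i - \<tau>) 0) = C"
proof -
  define A where "A = (\<Sum>i\<in>UNIV. \<bar>y $ i\<bar>)"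
  have y_le_A: "\<bar>y $ i\<bar> \<le> A" for i
    unfolding A_def by (rule member_le_sum) auto
  define \<phi> where "\<phi> t = (\<Sum>i\<in>UNIV. max (y $ i - t) 0)" for t
  obtain k :: 'n where True by blast
  have "\<phi> A = 0"
    unfolding \<phi>_def using y_le_A by (intro sum.neutral) (auto simp: abs_le_iff)
  moreover have "C \<le> \<phi> (- A - C)"
  proof -
    have "C \<le> max (y $ k - (- A - C)) 0" using y_le_A[of k] by (auto simp: abs_le_iff)
    also have "\<dots> \<le> \<phi> (- A - C)" unfolding \<phi>_def by (rule member_le_sum) auto
    finally show ?thesis .
  qed
  moreover have "- A - C \<le> A" using assms y_le_A[of k] by auto
  moreover have "\<forall>t. isCont \<phi> t" unfolding \<phi>_def by (intro allI continuous_intros)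
  ultimately obtain t where "\<phi> t = C"
    using IVT2[of \<phi> A C "- A - C"] assms by force
  then show ?thesis using that unfolding \<phi>_def by blast
qed

lemma piSplus_threshold:
  assumes "C > 0"
  obtains \<tau> where "piSplus C y = (\<chi> i. max ((y::real^'n) $ i - \<tau>) 0)"
    and "(\<Sum>i\<in>UNIV. max (y $ i - \<tau>) 0) = C"
  using threshold_exists[OF assms] piSplus_eq_threshold by metis

lemma piSplus_nth_bounds:
  assumes "C \<ge> 0"
  shows "0 \<le> piSplus C y $ k" and "piSplus C y $ k \<le> C"
proof -
  have "piSplus C y \<in> KSplus C"
    unfolding piSplus_def using assms
    by (intro closest_point_in_set closed_KSplus KSplus_nonempty)
  then have nonneg: "\<And>i. 0 \<le> piSplus C y $ i" and "(\<Sum>i\<in>UNIV. piSplus C y $ i) = C"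
    by (auto simp: KSplus_def KS_def)
  then show "0 \<le> piSplus C y $ k" "piSplus C y $ k \<le> C"
    using member_le_sum[of k UNIV "\<lambda>i. piSplus C y $ i"] by auto
qed

lemma piSplus_eq_shifted_piS:
  assumes "C > 0"
  obtains s where "0 \<le> s" and "s \<le> (\<Sum>k\<in>UNIV. negp (piS C y $ k))"
    and "piSplus C y = (\<chi> k. max (piS C (y::real^'n) $ k - s) 0)"
proof -
  obtain \<tau> where proj: "piSplus C y = (\<chi> k. max (y $ k - \<tau>) 0)"
    and sum_eq: "(\<Sum>k\<in>UNIV. max (y $ k - \<tau>) 0) = C"
    using piSplus_threshold[OF assms] by blast
  define t where "t = ((\<Sum>k\<in>UNIV. y $ k) - C) / CARD('n)"
  have piS_y: "piS C y $ k = y $ k - t" for k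
    by (simp add: piS_eq t_def)
  have "(\<Sum>k\<in>UNIV. y $ k - \<tau>) \<le> C"
    unfolding sum_eq[symmetric] by (intro sum_mono) simp
  then have "t \<le> \<tau>"
    by (simp add: t_def sum_subtractf divide_le_eq mult.commute)
  obtain k0 where k0: "y $ k0 - \<tau> > 0"
  proof (rule ccontr)
    assume "\<not> thesis"
    then have "\<forall>k. y $ k - \<tau> \<le> 0" using that by (meson not_less)
    then have "(\<Sum>k\<in>UNIV. max (y $ k - \<tau>) 0) = 0" by (intro sum.neutral) auto
    then show False using sum_eq assms by simp
  qed
  have "(\<Sum>k\<in>UNIV. max (y $ k - t) 0) = (\<Sum>k\<in>UNIV. (y $ k - t) + negp (y $ k - t))"
    by (intro sum.cong) (auto simp: negp_def)
  also have "\<dots> = C + (\<Sum>k\<in>UNIV. negp (y $ k - t))"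
    by (simp add: sum.distrib sum_subtractf t_def)
  finally have sum_pos: "(\<Sum>k\<in>UNIV. max (y $ k - t) 0) = C + (\<Sum>k\<in>UNIV. negp (y $ k - t))" .
  have "\<tau> - t = max (y $ k0 - t) 0 - max (y $ k0 - \<tau>) 0"
    using k0 \<open>t \<le> \<tau>\<close> by auto
  also have "\<dots> \<le> (\<Sum>k\<in>UNIV. max (y $ k - t) 0 - max (y $ k - \<tau>) 0)"
    by (rule member_le_sum) (use \<open>t \<le> \<tau>\<close> in auto)
  also have "\<dots> = (\<Sum>k\<in>UNIV. negp (y $ k - t))"
    using sum_pos sum_eq by (simp add: sum_subtractf)
  finally have "\<tau> - t \<le> (\<Sum>k\<in>UNIV. negp (piS C y $ k))"
    by (simp add: piS_y)
  moreover have "piSplus C y = (\<chi> k. max (piS C y $ k - (\<tau> - t)) 0)"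
    by (simp add: proj piS_y)
  ultimately show ?thesis
    using \<open>t \<le> \<tau>\<close> by (intro that[of "\<tau> - t"]) simp_all
qed

lemma piS_nth_diff: "piS C y $ j - piS C y $ i = y $ j - y $ i"
  by (simp add: piS_eq)

lemma piSplus_nth_mono:
  assumes "C > 0" "y $ i \<le> y $ j"
  shows "piSplus C y $ i \<le> piSplus C y $ j"
proof -
  obtain s where "piSplus C y = (\<chi> k. max (piS C y $ k - s) 0)"
    using piSplus_eq_shifted_piS[OF assms(1)] .
  then show ?thesis
    using assms(2) piS_nth_diff[of C y j i] by simp
qed

lemma piSplus_nth_diff_le:
  assumes "C > 0" "y $ i \<le> y $ j"
  shows "piSplus C y $ j - piSplus C y $ i \<le> y $ j - y $ i"
proof -
  obtain s where "piSplus C y = (\<chi> k. max (piS C y $ k - s) 0)"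
    using piSplus_eq_shifted_piS[OF assms(1)] .
  then show ?thesis
    using assms(2) piS_nth_diff[of C y j i] by simp
qed

lemma pos_part_piS_diff_le_piSplus_diff:
  assumes "C > 0" "y $ i \<le> y $ j"
  shows "max (piS C y $ i) 0 - max (piS C y $ j) 0 \<le> piSplus C y $ i - piSplus C y $ j"
proof -
  obtain s where "0 \<le> s" "piSplus C y = (\<chi> k. max (piS C y $ k - s) 0)"
    using piSplus_eq_shifted_piS[OF assms(1)] .
  then show ?thesis
    using assms(2) piS_nth_diff[of C y j i] by simp
qed

lemma piSplus_diff_le_pos_part_piS_diff:
  assumes "C > 0"
  shows "piSplus C y $ i - piSplus C y $ j
           \<le> max (piS C y $ i) 0 - max (piS C y $ j) 0 + (\<Sum>k\<in>UNIV. negp (piS C y $ k))"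
proof -
  obtain s where "0 \<le> s" "s \<le> (\<Sum>k\<in>UNIV. negp (piS C y $ k))"
    "piSplus C y = (\<chi> k. max (piS C y $ k - s) 0)"
    using piSplus_eq_shifted_piS[OF assms(1)] .
  then show ?thesis by simp
qed

lemma borel_measurable_vec_nth_comp [measurable (raw)]:
  "g \<in> borel_measurable M \<Longrightarrow> (\<lambda>x. g x $ k :: real) \<in> borel_measurable M"
  by (erule measurable_compose) (intro borel_measurable_continuous_onI continuous_intros)

lemma borel_measurable_piS [measurable]: "piS C \<in> borel_measurable (borel :: (real^'n) measure)"
  unfolding piS_eq[abs_def] by (intro borel_measurable_continuous_onI continuous_intros) auto

lemma borel_measurable_piSplus [measurable]:
  "C \<ge> 0 \<Longrightarrow> piSplus C \<in> borel_measurable (borel :: (real^'n) measure)"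
  unfolding piSplus_def
  by (intro borel_measurable_continuous_onI continuous_on_closest_point convex_KSplus closed_KSplus
      KSplus_nonempty)

lemma borel_measurable_pos_part_vec [measurable]:
  "pos_part_vec \<in> borel_measurable (borel :: (real^'n) measure)"
  unfolding pos_part_vec_def[abs_def] by (intro borel_measurable_continuous_onI continuous_intros)

definition vec_permute :: "('n \<Rightarrow> 'n) \<Rightarrow> 'a^'n \<Rightarrow> 'a^'n" where
  "vec_permute p v = (\<chi> k. v $ p k)"

lemma vec_permute_nth [simp]: "vec_permute p v $ k = v $ p k"
  by (simp add: vec_permute_def)

lemma vec_permute_id [simp]: "vec_permute id v = v"
  by (simp add: vec_eq_iff)

lemma vec_permute_diff: "vec_permute p (u - v) = vec_permute p u - vec_permute p (v::'a::ab_group_add^'n)"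
  by (simp add: vec_eq_iff)

lemma linear_vec_permute: "linear (vec_permute p :: real^'n \<Rightarrow> real^'n)"
  by (rule linearI) (simp_all add: vec_eq_iff)

lemma borel_measurable_vec_permute [measurable]:
  "(vec_permute p :: real^'n::finite \<Rightarrow> real^'n) \<in> borel_measurable borel"
  by (intro borel_measurable_continuous_onI linear_continuous_on)
    (simp add: linear_conv_bounded_linear[symmetric] linear_vec_permute)

lemma sum_vec_permute:
  "p permutes UNIV \<Longrightarrow> (\<Sum>k\<in>UNIV. g (vec_permute p v $ k)) = (\<Sum>k\<in>UNIV. g (v $ k))"
  using sum.permute[of p UNIV "\<lambda>k. g (v $ k)"] by (simp add: comp_def)

lemma prod_vec_permute:
  "p permutes UNIV \<Longrightarrow> (\<Prod>k\<in>UNIV. g (vec_permute p v $ k)) = (\<Prod>k\<in>UNIV. g (v $ k))"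
  using prod.permute[of p UNIV "\<lambda>k. g (v $ k)"] by (simp add: comp_def)

abbreviation vec_swap :: "'n \<Rightarrow> 'n \<Rightarrow> 'a^'n \<Rightarrow> 'a^'n" where
  "vec_swap i j \<equiv> vec_permute (Transposition.transpose i j)"

lemma vec_swap_swap [simp]: "vec_swap i j (vec_swap i j v) = v"
  by (simp add: vec_eq_iff)

lemma transpose_permutes_UNIV: "Transposition.transpose i j permutes UNIV"
  by (simp add: permutes_swap_id)

lemma piS_vec_permute:
  "p permutes UNIV \<Longrightarrow> piS C (vec_permute p y) = vec_permute p (piS C (y::real^'n))"
  using sum_vec_permute[of p "\<lambda>t. t" y] by (simp add: piS_eq vec_eq_iff)

lemma piSplus_vec_permute:
  assumes "C > 0" "p permutes UNIV"
  shows "piSplus C (vec_permute p y) = vec_permute p (piSplus C (y::real^'n))"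
proof -
  obtain \<tau> where proj: "piSplus C y = (\<chi> k. max (y $ k - \<tau>) 0)"
    and sum_eq: "(\<Sum>k\<in>UNIV. max (y $ k - \<tau>) 0) = C"
    using piSplus_threshold[OF assms(1)] by blast
  have "(\<Sum>k\<in>UNIV. max (vec_permute p y $ k - \<tau>) 0) = C"
    using sum_vec_permute[OF assms(2), of "\<lambda>t. max (t - \<tau>) 0"] sum_eq by simp
  then show ?thesis
    by (simp add: piSplus_eq_threshold proj vec_eq_iff)
qed

lemma Basis_vec_real: "(Basis :: (real^'n) set) = range (\<lambda>k. axis k 1)"
  by (auto simp: Basis_vec_def)

lemma prod_Basis_vec:
  "(\<Prod>b\<in>(Basis::(real^'n) set). g b) = (\<Prod>k\<in>UNIV. (g (axis k 1) :: 'a::comm_monoid_mult))"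
  unfolding Basis_vec_real by (subst prod.reindex) (auto simp: inj_on_def axis_eq_axis)

lemma vimage_vec_permute_box:
  assumes "p permutes UNIV"
  shows "vec_permute p -` box l u = box (vec_permute (inv p) l) (vec_permute (inv p) (u::real^'n))"
proof -
  have "(\<forall>k. l $ k < v $ p k \<and> v $ p k < u $ k) \<longleftrightarrow>
        (\<forall>k. l $ inv p k < v $ k \<and> v $ k < u $ inv p k)" for v :: "real^'n"
    by (metis assms permutes_inverses)
  then show ?thesis by (auto simp: mem_box_cart)
qed

lemma lborel_distr_vec_permute:
  assumes p: "p permutes UNIV"
  shows "distr lborel borel (vec_permute p) = (lborel :: (real^'n::finite) measure)"
proof (rule lborel_eqI[symmetric])
  fix l u :: "real^'n" assume "\<And>b. b \<in> Basis \<Longrightarrow> l \<bullet> b \<le> u \<bullet> b"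
  then have le: "l $ k \<le> u $ k" for k
    by (simp add: cart_eq_inner_axis Basis_vec_real)
  have "emeasure (distr lborel borel (vec_permute p)) (box l u)
        = emeasure lborel (box (vec_permute (inv p) l) (vec_permute (inv p) u))"
    by (simp add: emeasure_distr vimage_vec_permute_box[OF p])
  also have "\<dots> = (\<Prod>b\<in>Basis. (vec_permute (inv p) u - vec_permute (inv p) l) \<bullet> b)"
    by (rule emeasure_lborel_box) (auto simp: Basis_vec_real cart_eq_inner_axis[symmetric] le)
  also have "\<dots> = (\<Prod>k\<in>UNIV. (u - l) $ inv p k)"
    by (simp add: prod_Basis_vec cart_eq_inner_axis[symmetric])
  also have "\<dots> = (\<Prod>b\<in>Basis. (u - l) \<bullet> b)"
    using prod_vec_permute[OF permutes_inv[OF p], of "\<lambda>t. t" "u - l"]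
    by (simp add: prod_Basis_vec cart_eq_inner_axis[symmetric])
  finally show "emeasure (distr lborel borel (vec_permute p)) (box l u) = (\<Prod>b\<in>Basis. (u - l) \<bullet> b)" .
qed simp

lemma lborel_integral_invariant:
  fixes g :: "'a::euclidean_space \<Rightarrow> real"
  assumes [measurable]: "T \<in> borel_measurable borel" "g \<in> borel_measurable borel"
    and invariant: "distr lborel borel T = lborel"
  shows "(\<integral>w. g (T w) \<partial>lborel) = integral\<^sup>L lborel g"
    and "integrable lborel (\<lambda>w. g (T w)) \<longleftrightarrow> integrable lborel g"
  using integral_distr[of T lborel borel g] integrable_distr_eq[of T lborel borel g]
  by (simp_all add: invariant)

lemma nn_integral_lborel_prod_vec:
  fixes g :: "'n::finite \<Rightarrow> real \<Rightarrow> ennreal"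
  assumes [measurable]: "\<And>k. g k \<in> borel_measurable borel"
  shows "(\<integral>\<^sup>+v. (\<Prod>k\<in>UNIV. g k (v $ k)) \<partial>lborel) = (\<Prod>k\<in>UNIV. \<integral>\<^sup>+t. g k t \<partial>lborel)"
proof -
  define h where "h b = g (THE k. b = axis k 1)" for b :: "real^'n"
  have h_axis: "h (axis k 1) = g k" for k
    by (simp add: h_def axis_eq_axis)
  have "(\<integral>\<^sup>+v. (\<Prod>k\<in>UNIV. g k (v $ k)) \<partial>lborel) = (\<integral>\<^sup>+v. (\<Prod>b\<in>Basis. h b (v \<bullet> b)) \<partial>lborel)"
    by (simp add: prod_Basis_vec h_axis cart_eq_inner_axis[symmetric])
  also have "\<dots> = (\<Prod>b\<in>Basis. \<integral>\<^sup>+t. h b t \<partial>lborel)"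
    by (rule nn_integral_lborel_prod) (auto simp: Basis_vec_real h_axis)
  also have "\<dots> = (\<Prod>k\<in>UNIV. \<integral>\<^sup>+t. g k t \<partial>lborel)"
    by (simp add: prod_Basis_vec h_axis)
  finally show ?thesis .
qed

lemma integrable_vec_componentwise:
  fixes g :: "'a \<Rightarrow> real^'n"
  assumes "\<And>k. integrable M (\<lambda>x. g x $ k)" and "g \<in> borel_measurable M"
  shows "integrable M g"
proof (rule Bochner_Integration.integrable_bound[OF _ assms(2)])
  show "integrable M (\<lambda>x. \<Sum>k\<in>UNIV. \<bar>g x $ k\<bar>)"
    using assms(1) by auto
  show "AE x in M. norm (g x) \<le> norm (\<Sum>k\<in>UNIV. \<bar>g x $ k\<bar>)"
    by (intro AE_I2) (simp add: sum_nonneg norm_le_l1_cart)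
qed

lemma bias_nth:
  assumes "\<And>k. integrable M (\<lambda>v. p (x + v) $ k)" and "(\<lambda>v. p (x + v)) \<in> borel_measurable M"
  shows "bias M p x $ k = (\<integral>v. p (x + v) $ k \<partial>M) - x $ k"
  using integral_bounded_linear[OF bounded_linear_vec_nth integrable_vec_componentwise[OF assms], of k]
  by (simp add: bias_def)

section \<open>Product noise with a PF2 marginal density\<close>

definition product_density :: "(real \<Rightarrow> real) \<Rightarrow> real^'n::finite \<Rightarrow> real" where
  "product_density f v = (\<Prod>i\<in>UNIV. f (v $ i))"

definition product_noise :: "(real \<Rightarrow> real) \<Rightarrow> (real^'n::finite) measure" where
  "product_noise f = density lborel (\<lambda>v. ennreal (product_density f v))"

lemma sets_product_noise [measurable_cong, simp]: "sets (product_noise f) = sets borel"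
  by (simp add: product_noise_def)

lemma space_product_noise [simp]: "space (product_noise f) = UNIV"
  by (simp add: product_noise_def)

lemma product_density_vec_permute:
  "p permutes UNIV \<Longrightarrow> product_density f (vec_permute p v) = product_density f v"
  unfolding product_density_def by (rule prod_vec_permute)

text \<open>The hypothesis \<open>pf2\<close> says that \<open>f\<close> is a Polya frequency function of order 2, i.e.
  log-concave on its support.\<close>

locale pf2_density =
  fixes f :: "real \<Rightarrow> real"
  assumes nonneg: "\<And>t. 0 \<le> f t"
    and borel_measurable [measurable]: "f \<in> borel_measurable borel"
    and nn_integral_eq_1: "(\<integral>\<^sup>+t. ennreal (f t) \<partial>lborel) = 1"
    and abs_moment_finite: "(\<integral>\<^sup>+t. ennreal (\<bar>t\<bar> * f t) \<partial>lborel) < \<infinity>"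
    and pf2: "\<And>s t d. s \<le> t \<Longrightarrow> 0 \<le> d \<Longrightarrow> f s * f (t + d) \<le> f (s + d) * f t"
begin

lemma product_density_nonneg: "0 \<le> product_density f v"
  unfolding product_density_def by (intro prod_nonneg) (simp add: nonneg)

lemma borel_measurable_product_density [measurable]:
  "product_density f \<in> borel_measurable (borel :: (real^'n::finite) measure)"
  unfolding product_density_def by measurable

lemma ennreal_product_density:
  "ennreal (product_density f v) = (\<Prod>k\<in>UNIV. ennreal (f (v $ k)))"
  unfolding product_density_def by (simp add: prod_ennreal nonneg)

lemma prob_space_product_noise: "prob_space (product_noise f :: (real^'n::finite) measure)"
proof
  have "emeasure (product_noise f) (space (product_noise f) :: (real^'n) set)
        = (\<integral>\<^sup>+v. ennreal (product_density f (v::real^'n)) \<partial>lborel)"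
    unfolding product_noise_def by (subst emeasure_density) auto
  also have "\<dots> = (\<integral>\<^sup>+v. (\<Prod>k\<in>UNIV. ennreal (f ((v::real^'n) $ k))) \<partial>lborel)"
    by (simp add: ennreal_product_density)
  also have "\<dots> = 1"
    using nn_integral_lborel_prod_vec[of "\<lambda>_ t. ennreal (f t)"] by (simp add: nn_integral_eq_1)
  finally show "emeasure (product_noise f) (space (product_noise f) :: (real^'n) set) = 1" .
qed

lemma finite_measure_product_noise: "finite_measure (product_noise f :: (real^'n::finite) measure)"
  using prob_space_product_noise by (rule prob_space.finite_measure)

lemma integrable_const_product_noise [simp]:
  "integrable (product_noise f :: (real^'n::finite) measure) (\<lambda>_. c)"
  by (rule finite_measure.integrable_const[OF finite_measure_product_noise])

lemma measure_product_noise_UNIV [simp]: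
  "measure (product_noise f :: (real^'n::finite) measure) UNIV = 1"
  using prob_space.prob_space[OF prob_space_product_noise] by simp

lemma integrable_product_noise_nth:
  "integrable (product_noise f :: (real^'n::finite) measure) (\<lambda>v. v $ k)"
proof (rule integrableI_bounded)
  define g where "g q t = ennreal (if q = k then \<bar>t\<bar> * f t else f t)" for q t
  have "(\<integral>\<^sup>+v. ennreal (norm (v $ k)) \<partial>product_noise f)
        = (\<integral>\<^sup>+v. (\<Prod>q\<in>UNIV. g q (v $ q)) \<partial>lborel)"
  proof -
    have "ennreal (product_density f v) * ennreal \<bar>v $ k\<bar> = (\<Prod>q\<in>UNIV. g q (v $ q))" for v :: "real^'n"
      by (simp add: product_density_def g_def prod.remove[where x=k] prod_ennreal nonneg
          ennreal_mult'[symmetric] prod_nonneg mult_ac)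
    then show ?thesis
      by (simp add: product_noise_def nn_integral_density)
  qed
  also have "\<dots> = (\<Prod>q\<in>UNIV. \<integral>\<^sup>+t. g q t \<partial>lborel)"
    by (rule nn_integral_lborel_prod_vec) (simp add: g_def)
  also have "\<dots> < \<infinity>"
  proof -
    have "(\<integral>\<^sup>+t. g q t \<partial>lborel) \<noteq> \<top>" for q
      using abs_moment_finite by (cases "q = k") (simp_all add: g_def nn_integral_eq_1)
    then have "(\<Prod>q\<in>UNIV. \<integral>\<^sup>+t. g q t \<partial>lborel) \<noteq> \<top>"
      by (subst ennreal_prod_eq_top) auto
    then show ?thesis
      by (simp add: less_top)
  qed
  finally show "(\<integral>\<^sup>+v. ennreal (norm (v $ k)) \<partial>product_noise f) < \<infinity>" .
qed simp

lemma integral_product_noise_shift: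
  fixes h :: "real^'n::finite \<Rightarrow> real"
  assumes [measurable]: "h \<in> borel_measurable borel"
  shows "(\<integral>v. h (x + v) \<partial>product_noise f) = (\<integral>w. product_density f (w - x) * h w \<partial>lborel)"
    and "integrable (product_noise f) (\<lambda>v. h (x + v))
           \<longleftrightarrow> integrable lborel (\<lambda>w. product_density f (w - x) * h w)"
  using lborel_integral_invariant[OF _ _ lborel_distr_plus[of x],
      of "\<lambda>w. product_density f (w - x) * h w"]
  by (simp_all add: product_noise_def integral_density integrable_density product_density_nonneg)

lemma product_density_swap_le:
  fixes w x :: "real^'n::finite"
  assumes "x $ i \<le> x $ j" "w $ i \<le> w $ j"
  shows "product_density f (w - vec_swap i j x) \<le> product_density f (w - x)"
proof (cases "i = j")
  case False
  define R where "R = (\<Prod>k\<in>UNIV - {i, j}. f (w $ k - x $ k))"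
  have split: "product_density f v = f (v $ i) * f (v $ j) * (\<Prod>k\<in>UNIV - {i, j}. f (v $ k))" for v
    using False unfolding product_density_def
    by (simp add: prod.remove[of UNIV i] prod.remove[of "UNIV - {i}" j] Diff_insert2[symmetric]
        insert_commute mult.assoc)
  have "(\<Prod>k\<in>UNIV - {i, j}. f ((w - vec_swap i j x) $ k)) = R"
    unfolding R_def by (intro prod.cong) auto
  then have swapped: "product_density f (w - vec_swap i j x) = f (w $ i - x $ j) * f (w $ j - x $ i) * R"
    using split[of "w - vec_swap i j x"] by simp
  have unswapped: "product_density f (w - x) = f (w $ i - x $ i) * f (w $ j - x $ j) * R"
    using split[of "w - x"] by (simp add: R_def)
  have "f (w $ i - x $ j) * f ((w $ j - x $ j) + (x $ j - x $ i))
        \<le> f ((w $ i - x $ j) + (x $ j - x $ i)) * f (w $ j - x $ j)"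
    using assms by (intro pf2) auto
  moreover have "0 \<le> R"
    unfolding R_def by (intro prod_nonneg) (simp add: nonneg)
  ultimately show ?thesis
    unfolding swapped unswapped by (simp add: mult_right_mono)
qed simp

lemma integral_swap_nonneg:
  fixes x :: "real^'n::finite" and h :: "real^'n \<Rightarrow> real"
  assumes "x $ i \<le> x $ j"
    and [measurable]: "h \<in> borel_measurable borel"
    and antisym: "\<And>y. h (vec_swap i j y) = - h y"
    and nonneg_on_ordered: "\<And>y. y $ i \<le> y $ j \<Longrightarrow> 0 \<le> h y"
    and integrable: "integrable (product_noise f) (\<lambda>v. h (x + v))"
  shows "0 \<le> (\<integral>v. h (x + v) \<partial>product_noise f)"
proof -
  define F where "F w = product_density f (w - x) * h w" for w
  define G where "G w = product_density f (w - vec_swap i j x) * h w" for w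
  have [measurable]: "F \<in> borel_measurable borel" "G \<in> borel_measurable borel"
    unfolding F_def G_def by measurable
  have F_swap: "F (vec_swap i j w) = - G w" for w
  proof -
    have "vec_swap i j w - x = vec_swap i j (w - vec_swap i j x)"
      by (simp add: vec_permute_diff)
    then show ?thesis
      by (simp add: F_def G_def antisym product_density_vec_permute transpose_permutes_UNIV)
  qed
  note invariant = lborel_integral_invariant[OF _ _
      lborel_distr_vec_permute[OF transpose_permutes_UNIV[of i j]], where g = F]
  have int_F: "integrable lborel F"
    using integrable unfolding F_def by (simp add: integral_product_noise_shift(2))
  then have int_G: "integrable lborel G"
    using invariant(2) by (simp add: F_swap)
  \<comment> \<open>the swap exchanges \<open>F\<close> and \<open>-G\<close>, and pointwise \<open>F \<ge> G\<close> by the PF2 property\<close>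
  have "F w - G w = h w * (product_density f (w - x) - product_density f (w - vec_swap i j x))" for w
    unfolding F_def G_def by (simp add: algebra_simps)
  moreover have "0 \<le> h w * (product_density f (w - x) - product_density f (w - vec_swap i j x))" for w
  proof (cases "w $ i \<le> w $ j")
    case True
    then show ?thesis
      using nonneg_on_ordered product_density_swap_le[OF assms(1)] by simp
  next
    case False
    then have "h w \<le> 0"
      using nonneg_on_ordered[of "vec_swap i j w"] antisym[of w] by simp
    moreover have "product_density f (w - x) \<le> product_density f (w - vec_swap i j x)"
    proof -
      have "vec_swap i j w - vec_swap i j x = vec_swap i j (w - x)"
        and "vec_swap i j w - x = vec_swap i j (w - vec_swap i j x)"
        by (simp_all add: vec_eq_iff)
      then show ?thesis
        using product_density_swap_le[OF assms(1), of "vec_swap i j w"] False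
        by (simp add: product_density_vec_permute transpose_permutes_UNIV)
    qed
    ultimately show ?thesis
      by (simp add: mult_nonpos_nonpos)
  qed
  ultimately have "0 \<le> integral\<^sup>L lborel (\<lambda>w. F w - G w)"
    by (intro integral_nonneg_AE) simp
  also have "\<dots> = 2 * integral\<^sup>L lborel F"
    using int_F int_G invariant(1) by (simp add: F_swap)
  finally show ?thesis
    unfolding F_def by (simp add: integral_product_noise_shift(1))
qed

lemma integral_product_noise_nth_eq:
  fixes i j :: "'n::finite"
  shows "(\<integral>v. v $ i \<partial>(product_noise f :: (real^'n::finite) measure)) = (\<integral>v. v $ j \<partial>product_noise f)"
  using lborel_integral_invariant(1)[OF _ _ lborel_distr_vec_permute[OF transpose_permutes_UNIV[of i j]],
      where g = "\<lambda>w. product_density f w * w $ j"]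
    integral_product_noise_shift(1)[of "\<lambda>v. v $ i" 0] integral_product_noise_shift(1)[of "\<lambda>v. v $ j" 0]
  by (simp add: product_density_vec_permute transpose_permutes_UNIV)

lemma integrable_piSplus_nth:
  assumes "C \<ge> 0"
  shows "integrable (product_noise f) (\<lambda>v. piSplus C ((x::real^'n::finite) + v) $ k)"
proof (rule finite_measure.integrable_const_bound[OF finite_measure_product_noise, where B = C])
  show "AE v in product_noise f. norm (piSplus C (x + v) $ k) \<le> C"
  proof (intro AE_I2)
    fix v
    show "norm (piSplus C (x + v) $ k) \<le> C"
      using piSplus_nth_bounds[OF assms, of "x + v" k] by simp
  qed
  have [measurable]: "piSplus C \<in> borel_measurable (borel :: (real^'n) measure)"
    using assms by (rule borel_measurable_piSplus)
  show "(\<lambda>v. piSplus C (x + v) $ k) \<in> borel_measurable (product_noise f)"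
    by measurable
qed

lemma integrable_piS_nth:
  "integrable (product_noise f) (\<lambda>v. piS C ((x::real^'n::finite) + v) $ k)"
  unfolding piS_eq
  by (simp, intro Bochner_Integration.integrable_diff Bochner_Integration.integrable_add
      Bochner_Integration.integrable_divide_zero Bochner_Integration.integrable_sum
      integrable_product_noise_nth integrable_const_product_noise)

lemma bias_piSplus_nth:
  assumes "C > 0"
  shows "bias (product_noise f) (piSplus C) x $ k = (\<integral>v. piSplus C (x + v) $ k \<partial>product_noise f) - x $ k"
proof (rule bias_nth)
  show "integrable (product_noise f) (\<lambda>v. piSplus C (x + v) $ k)" for k
    using assms by (simp add: integrable_piSplus_nth)
  have [measurable]: "piSplus C \<in> borel_measurable (borel :: (real^'n) measure)"
    using assms by (intro borel_measurable_piSplus) simp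
  show "(\<lambda>v. piSplus C (x + v)) \<in> borel_measurable (product_noise f)"
    by simp
qed

lemma bias_pos_part_piS_nth:
  "bias (product_noise f) (\<lambda>y. pos_part_vec (piS C y)) x $ k
     = (\<integral>v. max (piS C (x + v) $ k) 0 \<partial>product_noise f) - x $ k"
proof (subst bias_nth)
  show "integrable (product_noise f) (\<lambda>v. pos_part_vec (piS C (x + v)) $ k)" for k
    by (simp add: pos_part_vec_def integrable_piS_nth)
  show "(\<lambda>v. pos_part_vec (piS C (x + v))) \<in> borel_measurable (product_noise f)"
    by simp
qed (simp add: pos_part_vec_def)

lemma integral_piSplus_nth_mono:
  fixes x :: "real^'n::finite"
  assumes C: "C > 0" and "x $ i \<le> x $ j"
  shows "(\<integral>v. piSplus C (x + v) $ i \<partial>product_noise f) \<le> (\<integral>v. piSplus C (x + v) $ j \<partial>product_noise f)"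
proof -
  have [measurable]: "piSplus C \<in> borel_measurable (borel :: (real^'n) measure)"
    using C by (intro borel_measurable_piSplus) simp
  have "0 \<le> (\<integral>v. piSplus C (x + v) $ j - piSplus C (x + v) $ i \<partial>product_noise f)"
    using C by (intro integral_swap_nonneg[OF assms(2)])
      (auto simp: piSplus_vec_permute transpose_permutes_UNIV piSplus_nth_mono integrable_piSplus_nth)
  then show ?thesis
    using C by (simp add: integrable_piSplus_nth)
qed

lemma integral_piSplus_nth_diff_le:
  fixes x :: "real^'n::finite"
  assumes C: "C > 0" and "x $ i \<le> x $ j"
  shows "(\<integral>v. piSplus C (x + v) $ j \<partial>product_noise f) - (\<integral>v. piSplus C (x + v) $ i \<partial>product_noise f)
           \<le> x $ j - x $ i"
proof -
  have [measurable]: "piSplus C \<in> borel_measurable (borel :: (real^'n) measure)"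
    using C by (intro borel_measurable_piSplus) simp
  define h where "h y = (y $ j - y $ i) - (piSplus C y $ j - piSplus C y $ i)" for y :: "real^'n"
  have "0 \<le> (\<integral>v. h (x + v) \<partial>product_noise f)"
    using C unfolding h_def
    by (intro integral_swap_nonneg[OF assms(2)])
      (auto simp: piSplus_vec_permute transpose_permutes_UNIV piSplus_nth_diff_le
        integrable_piSplus_nth integrable_product_noise_nth)
  also have "\<dots> = (x $ j - x $ i) - ((\<integral>v. piSplus C (x + v) $ j \<partial>product_noise f)
                     - (\<integral>v. piSplus C (x + v) $ i \<partial>product_noise f))"
    using C integral_product_noise_nth_eq[of j i]
    by (simp add: h_def integrable_piSplus_nth integrable_product_noise_nth)
  finally show ?thesis by simp
qed

lemma antimono_bias_piSplus:
  fixes x :: "real^'n::{finite,linorder}"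
  assumes "C > 0" and "\<forall>i j. i \<le> j \<longrightarrow> x $ i \<le> x $ j"
  shows "antimono (\<lambda>k. bias (product_noise f) (piSplus C) x $ k)"
proof (rule antimonoI)
  fix i j :: 'n assume "i \<le> j"
  then show "bias (product_noise f) (piSplus C) x $ j \<le> bias (product_noise f) (piSplus C) x $ i"
    using integral_piSplus_nth_diff_le[OF assms(1), of x i j] assms(2)
    by (simp add: bias_piSplus_nth[OF assms(1)])
qed

lemma integral_pos_part_piS_diff_le:
  fixes x :: "real^'n::finite"
  assumes C: "C > 0" and "x $ i \<le> x $ j"
  shows "(\<integral>v. max (piS C (x + v) $ i) 0 \<partial>product_noise f) - (\<integral>v. max (piS C (x + v) $ j) 0 \<partial>product_noise f)
           \<le> (\<integral>v. piSplus C (x + v) $ i \<partial>product_noise f) - (\<integral>v. piSplus C (x + v) $ j \<partial>product_noise f)"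
proof -
  have [measurable]: "piSplus C \<in> borel_measurable (borel :: (real^'n) measure)"
    using C by (intro borel_measurable_piSplus) simp
  define h where "h y = (piSplus C y $ i - piSplus C y $ j) - (max (piS C y $ i) 0 - max (piS C y $ j) 0)"
    for y :: "real^'n"
  have "0 \<le> (\<integral>v. h (x + v) \<partial>product_noise f)"
    using C unfolding h_def
    by (intro integral_swap_nonneg[OF assms(2)])
      (auto simp: piSplus_vec_permute piS_vec_permute transpose_permutes_UNIV
        pos_part_piS_diff_le_piSplus_diff integrable_piSplus_nth integrable_piS_nth)
  then show ?thesis
    using C by (simp add: h_def integrable_piSplus_nth integrable_piS_nth)
qed

lemma integral_piSplus_diff_le:
  fixes x :: "real^'n::finite"
  assumes C: "C > 0"
  shows "(\<integral>v. piSplus C (x + v) $ i \<partial>product_noise f) - (\<integral>v. piSplus C (x + v) $ j \<partial>product_noise f)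
           \<le> (\<integral>v. max (piS C (x + v) $ i) 0 \<partial>product_noise f) - (\<integral>v. max (piS C (x + v) $ j) 0 \<partial>product_noise f)
             + (\<Sum>k\<in>UNIV. \<integral>v. negp (piS C (x + v) $ k) \<partial>product_noise f)"
proof -
  have int_negp: "integrable (product_noise f) (\<lambda>v. negp (piS C (x + v) $ k))" for k
    unfolding negp_def by (intro Bochner_Integration.integrable_minus integrable_min integrable_piS_nth) simp
  have "(\<integral>v. piSplus C (x + v) $ i - piSplus C (x + v) $ j \<partial>product_noise f)
        \<le> (\<integral>v. max (piS C (x + v) $ i) 0 - max (piS C (x + v) $ j) 0
              + (\<Sum>k\<in>UNIV. negp (piS C (x + v) $ k)) \<partial>product_noise f)"
    using C int_negp
    by (intro integral_mono piSplus_diff_le_pos_part_piS_diff)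
      (auto simp: integrable_piSplus_nth integrable_piS_nth)
  then show ?thesis
    using C int_negp by (simp add: integrable_piSplus_nth integrable_piS_nth integral_sum)
qed

end

section \<open>Laplace and Gaussian noise\<close>

lemma nn_integral_lborel_even:
  fixes g :: "real \<Rightarrow> ennreal"
  assumes [measurable]: "g \<in> borel_measurable borel" and even: "\<And>t. g (- t) = g t"
  shows "(\<integral>\<^sup>+t. g t \<partial>lborel) = 2 * (\<integral>\<^sup>+t. g t * indicator {0..} t \<partial>lborel)"
proof -
  have "(\<integral>\<^sup>+t. g t \<partial>lborel) = (\<integral>\<^sup>+t. g t * indicator {0..} t + g t * indicator {..<0} t \<partial>lborel)"
    by (intro nn_integral_cong) (auto split: split_indicator)
  also have "\<dots> = (\<integral>\<^sup>+t. g t * indicator {0..} t \<partial>lborel) + (\<integral>\<^sup>+t. g t * indicator {..<0} t \<partial>lborel)"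
    by (rule nn_integral_add) auto
  also have "(\<integral>\<^sup>+t. g t * indicator {..<0} t \<partial>lborel) = (\<integral>\<^sup>+t. g t * indicator {0<..} t \<partial>lborel)"
    using nn_integral_real_affine[of "\<lambda>t. g t * indicator {..<0} t" "-1" 0]
    by (simp add: even indicator_def)
  also have "\<dots> = (\<integral>\<^sup>+t. g t * indicator {0..} t \<partial>lborel)"
    using AE_lborel_singleton[of "0::real"]
    by (intro nn_integral_cong_AE) (auto split: split_indicator)
  finally show ?thesis by (simp add: mult_2)
qed

lemma nn_integral_laplace_abs_moment:
  assumes b: "b > 0"
  shows "(\<integral>\<^sup>+t. ennreal (\<bar>t\<bar> ^ k * laplace_density b t) \<partial>lborel) = ennreal (fact k * b ^ k)"
proof -
  \<comment> \<open>on the half line, the Laplace density is half the exponential density \<open>erlang_density 0 (1/b)\<close>\<close>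
  have "\<bar>t\<bar> ^ k * laplace_density b t = 1/2 * (erlang_density 0 (1/b) t * t ^ k)" if "0 \<le> t" for t
    using b that by (simp add: laplace_density_def erlang_density_def field_simps)
  then have half_line: "ennreal (\<bar>t\<bar> ^ k * laplace_density b t) * indicator {0..} t
                   = ennreal (1/2) * ennreal (erlang_density 0 (1/b) t * t ^ k)" for t
    using ennreal_mult'[of "1/2" "erlang_density 0 (1/b) t * t ^ k"]
    by (cases "0 \<le> t") (simp_all add: erlang_density_def)
  have "(\<integral>\<^sup>+t. ennreal (\<bar>t\<bar> ^ k * laplace_density b t) \<partial>lborel)
        = 2 * (\<integral>\<^sup>+t. ennreal (\<bar>t\<bar> ^ k * laplace_density b t) * indicator {0..} t \<partial>lborel)"
    by (rule nn_integral_lborel_even) (auto simp: laplace_density_def)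
  also have "\<dots> = 2 * (ennreal (1/2) * (\<integral>\<^sup>+t. ennreal (erlang_density 0 (1/b) t * t ^ k) \<partial>lborel))"
    by (simp only: half_line, subst nn_integral_cmult) auto
  also have "(\<integral>\<^sup>+t. ennreal (erlang_density 0 (1/b) t * t ^ k) \<partial>lborel) = ennreal (fact k * b ^ k)"
    using nn_integral_erlang_ith_moment[of "1/b" 0 k] b by (simp add: power_one_over)
  also have "2 * (ennreal (1/2) * ennreal (fact k * b ^ k)) = ennreal (fact k * b ^ k)"
    by (simp add: mult.assoc[symmetric] divide_ennreal_def[symmetric])
  finally show ?thesis .
qed

lemma exp_pf2:
  fixes \<phi> :: "real \<Rightarrow> real"
  assumes "\<phi> (s + d) + \<phi> t \<le> \<phi> s + \<phi> (t + d)"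
  shows "(K * exp (- \<phi> s)) * (K * exp (- \<phi> (t + d))) \<le> (K * exp (- \<phi> (s + d))) * (K * exp (- \<phi> t))"
proof -
  have "exp (- \<phi> s) * exp (- \<phi> (t + d)) \<le> exp (- \<phi> (s + d)) * exp (- \<phi> t)"
    using assms by (simp add: mult_exp_exp)
  then have "(K * K) * (exp (- \<phi> s) * exp (- \<phi> (t + d))) \<le> (K * K) * (exp (- \<phi> (s + d)) * exp (- \<phi> t))"
    by (simp add: mult_left_mono)
  then show ?thesis by (simp add: mult_ac)
qed

lemma pf2_density_laplace:
  assumes b: "b > 0"
  shows "pf2_density (laplace_density b)"
proof
  show "0 \<le> laplace_density b t" for t
    using b by (simp add: laplace_density_def)
  show "laplace_density b \<in> borel_measurable borel"
    unfolding laplace_density_def[abs_def] by measurable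
  show "(\<integral>\<^sup>+t. ennreal (laplace_density b t) \<partial>lborel) = 1"
    using nn_integral_laplace_abs_moment[OF b, of 0] by simp
  show "(\<integral>\<^sup>+t. ennreal (\<bar>t\<bar> * laplace_density b t) \<partial>lborel) < \<infinity>"
    using nn_integral_laplace_abs_moment[OF b, of 1] by simp
  have density: "laplace_density b y = 1 / (2 * b) * exp (- (\<bar>y\<bar> / b))" for y
    by (simp add: laplace_density_def)
  show "laplace_density b s * laplace_density b (t + d) \<le> laplace_density b (s + d) * laplace_density b t"
    if "s \<le> t" "0 \<le> d" for s t d
    unfolding density
  proof (rule exp_pf2)
    have "\<bar>s + d\<bar> + \<bar>t\<bar> \<le> \<bar>s\<bar> + \<bar>t + d\<bar>"
      using that by (auto simp: abs_if)
    then show "\<bar>s + d\<bar> / b + \<bar>t\<bar> / b \<le> \<bar>s\<bar> / b + \<bar>t + d\<bar> / b"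
      using b by (simp add: add_divide_distrib[symmetric] divide_right_mono)
  qed
qed

lemma pf2_density_normal:
  assumes \<sigma>: "\<sigma> > 0"
  shows "pf2_density (normal_density 0 \<sigma>)"
proof
  show "0 \<le> normal_density 0 \<sigma> t" for t
    by simp
  show "normal_density 0 \<sigma> \<in> borel_measurable borel"
    by simp
  show "(\<integral>\<^sup>+t. ennreal (normal_density 0 \<sigma> t) \<partial>lborel) = 1"
    using \<sigma> by (subst nn_integral_eq_integral) auto
  have "integrable lborel (\<lambda>t. \<bar>t\<bar> * normal_density 0 \<sigma> t)"
    using integrable_normal_moment_abs[OF \<sigma>, of 0 1] by (simp add: mult.commute)
  then show "(\<integral>\<^sup>+t. ennreal (\<bar>t\<bar> * normal_density 0 \<sigma> t) \<partial>lborel) < \<infinity>"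
    using integrableD(2)[of lborel "\<lambda>t. \<bar>t\<bar> * normal_density 0 \<sigma> t"] by (simp add: less_top)
  have density: "normal_density 0 \<sigma> y = 1 / sqrt (2 * pi * \<sigma>\<^sup>2) * exp (- (y\<^sup>2 / (2 * \<sigma>\<^sup>2)))" for y
    by (simp add: normal_density_def)
  show "normal_density 0 \<sigma> s * normal_density 0 \<sigma> (t + d) \<le> normal_density 0 \<sigma> (s + d) * normal_density 0 \<sigma> t"
    if "s \<le> t" "0 \<le> d" for s t d
    unfolding density
  proof (rule exp_pf2)
    have "d * s \<le> d * t"
      using that by (intro mult_left_mono) auto
    then have "(s + d)\<^sup>2 + t\<^sup>2 \<le> s\<^sup>2 + (t + d)\<^sup>2"
      by (simp add: power2_eq_square algebra_simps)
    then show "(s + d)\<^sup>2 / (2 * \<sigma>\<^sup>2) + t\<^sup>2 / (2 * \<sigma>\<^sup>2) \<le> s\<^sup>2 / (2 * \<sigma>\<^sup>2) + (t + d)\<^sup>2 / (2 * \<sigma>\<^sup>2)"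
      using \<sigma> by (simp add: add_divide_distrib[symmetric] divide_right_mono)
  qed
qed

section \<open>The bias bounds\<close>

lemma Max_range_antimono:
  fixes B :: "'a::{finite,linorder} \<Rightarrow> 'b::linorder"
  assumes "antimono B"
  shows "Max (range B) = B (Min UNIV)" and "Min (range B) = B (Max UNIV)"
proof -
  have "B i \<le> B (Min UNIV)" and "B (Max UNIV) \<le> B i" for i
    using assms by (simp_all add: antimonoD)
  then show "Max (range B) = B (Min UNIV)" and "Min (range B) = B (Max UNIV)"
    by (auto intro: Max_eqI Min_eqI)
qed

lemma noise_eq_product_noise:
  assumes "(\<exists>b>0. M = laplace_noise b) \<or> (\<exists>\<sigma>>0. M = gaussian_noise \<sigma>)"
  obtains f where "pf2_density f" and "M = product_noise f"
  using assms pf2_density_laplace pf2_density_normal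
  unfolding laplace_noise_def gaussian_noise_def product_noise_def product_density_def
  by blast

theorem theorem1:
  fixes x :: "real ^ 'n::{finite,linorder}" and C :: real and M :: "(real ^ 'n::{finite,linorder}) measure"
  assumes n2: "CARD('n) \<ge> 2"
    and Cpos: "C > 0"
    and xK: "x \<in> KSplus C"
    and sorted: "\<forall>i j. i \<le> j \<longrightarrow> x $ i \<le> x $ j"
    and noise: "(\<exists>b>0. M = laplace_noise b) \<or> (\<exists>\<sigma>>0. M = gaussian_noise \<sigma>)"
  shows "let \<alpha> = Max (range (\<lambda>i. bias M (piSplus C) x $ i))
                 - Min (range (\<lambda>i. bias M (piSplus C) x $ i));
             Bp = bias M (\<lambda>y. pos_part_vec (piS C y)) x;
             i1 = Min (UNIV :: 'n::{finite,linorder} set); iN = Max (UNIV :: 'n::{finite,linorder} set)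
         in \<alpha> \<ge> Bp $ i1 - Bp $ iN
          \<and> \<alpha> \<le> min (x $ iN - x $ i1)
                     (Bp $ i1 - Bp $ iN + (\<Sum>i\<in>UNIV. \<integral>\<eta>. negp (piS C (x + \<eta>) $ i) \<partial>M))"
proof -
  obtain f where "pf2_density f" and M: "M = product_noise f"
    using noise_eq_product_noise[OF noise] .
  interpret pf2_density f by fact
  note extrema = Max_range_antimono[OF antimono_bias_piSplus[OF Cpos sorted]]
  define i1 iN where "i1 = Min (UNIV :: 'n set)" and "iN = Max (UNIV :: 'n set)"
  have "x $ i1 \<le> x $ iN"
    using sorted by (simp add: i1_def iN_def)
  then show ?thesis
    using integral_pos_part_piS_diff_le[OF Cpos, of x i1 iN] integral_piSplus_nth_mono[OF Cpos, of x i1 iN]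
      integral_piSplus_diff_le[OF Cpos, of x i1 iN]
    unfolding Let_def M extrema i1_def[symmetric] iN_def[symmetric]
    by (simp add: bias_piSplus_nth[OF Cpos] bias_pos_part_piS_nth)
qed

end
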